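(* Let $W\in\mathbb{D}_n$ be a Dale matrix satisfying the Ground Assumption, and let $\sigma\subset\mathcal{E}$ be nonempty. Then $\sigma\in\mathcal{C}(W)$ if and only if both (i) $\rho(W_{\mathcal{E_U}\cap\sigma})<1$ (spectral condition; with the convention that the spectral radius of the empty matrix is $0$) and (ii) $\sigma\in\mathrm{code}(G_{\mathcal{E}},\mathcal{E_U})$, i.e. $N^+_{G_\mathcal{E}}(\sigma)\cap\mathcal{E_U}\subset\sigma$ (graph condition).
   Context: Threshold-linear network: $\dot x_i=-x_i+[\sum_j W_{ij}x_j+b_i]_+$ with $[y]_+=\max(0,y)$; a fixed point is $x^*$ with $x^*=[Wx^*+b]_+$. A Dale matrix $W\in\mathbb{D}_n$ is an $n\times n$ real matrix with a partition $[n]=\mathcal{E}\sqcup\mathcal{I}$ such that $W_{ii}=0$, $W_{ji}\ge 0$ for all $j$ if $i\in\mathcal{E}$, and $W_{ji}\le0$ for all $j$ if $i\in\mathcal{I}$. Ground Assumption: $(I-W)_\sigma$ nonsingular for every nonempty $\sigma\subset[n]$. Excitatory support: $\mathrm{supp}_+x=\{i\in\mathcal{E}:x_i>0\}$. Combinatorial code: $\mathcal{C}(W)=\{\mathrm{supp}_+x^*: b\in\mathbb{R}^n_{\ge0},\ x^*\in\mathbb{R}^n_{\ge0}\text{ a fixed point of }(W,b)\}$. The excitatory connectivity graph $G_\mathcal{E}$ is the directed graph on vertex set $\mathcal{E}$ with an arc $i\to j$ iff $i\ne j$ and $W_{ji}>0$. The uninhibited set is $\mathcal{E_U}=\{j\in\mathcal{E}: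 W_{ji}=0\ \forall i\in\mathcal{I}\}$. For a directed graph $G$ on $\mathcal{E}$ and $\sigma\subset\mathcal{E}$, the out-neighborhood is $N^+_G(\sigma)=\bigcup_{i\in\sigma}\{j\in\mathcal{E}: i\to j\}$, and for $U\subset\mathcal{E}$, $\mathrm{code}(G,U)=\{\sigma\subset\mathcal{E}: N^+_G(\sigma)\cap U\subset\sigma\}$. $W_{\tau}$ is the principal submatrix on $\tau$ and $\rho$ denotes spectral radius. *)

theory Defs
  imports "Jordan_Normal_Form.Spectral_Radius" "Jordan_Normal_Form.DL_Submatrix"
begin

definition dale_matrix :: "nat \<Rightarrow> real mat \<Rightarrow> nat set \<Rightarrow> nat set \<Rightarrow> bool" where
  "dale_matrix n W E I \<longleftrightarrow> W \<in> carrier_mat n n \<and> E \<union> I = {0..<n} \<and> E \<inter> I = {} \<and>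
     (\<forall>i<n. W $$ (i,i) = 0) \<and>
     (\<forall>i\<in>E. \<forall>j<n. W $$ (j,i) \<ge> 0) \<and>
     (\<forall>i\<in>I. \<forall>j<n. W $$ (j,i) \<le> 0)"

text \<open>Principal submatrix on index set tau (rows and columns in tau, in increasing order).\<close>
definition principal_submatrix :: "'a mat \<Rightarrow> nat set \<Rightarrow> 'a mat" where
  "principal_submatrix A \<tau> = submatrix A \<tau> \<tau>"

definition ground_assumption :: "nat \<Rightarrow> real mat \<Rightarrow> bool" where
  "ground_assumption n W \<longleftrightarrow>
     (\<forall>\<sigma>. \<sigma> \<noteq> {} \<and> \<sigma> \<subseteq> {0..<n} \<longrightarrow> det (principal_submatrix (1\<^sub>m n - W) \<sigma>) \<noteq> 0)"

definition tln_fixed_point :: "nat \<Rightarrow> real mat \<Rightarrow> real vec \<Rightarrow> real vec \<Rightarrow> bool" where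
  "tln_fixed_point n W b x \<longleftrightarrow> x \<in> carrier_vec n \<and>
     (\<forall>i<n. x $ i = max 0 (((W *\<^sub>v x) $ i) + (b $ i)))"

definition exc_support :: "nat set \<Rightarrow> real vec \<Rightarrow> nat set" where
  "exc_support E x = {i\<in>E. x $ i > 0}"

definition comb_code :: "nat \<Rightarrow> real mat \<Rightarrow> nat set \<Rightarrow> nat set set" where
  "comb_code n W E = {exc_support E x | x b.
      b \<in> carrier_vec n \<and> (\<forall>i<n. b $ i \<ge> 0) \<and>
      x \<in> carrier_vec n \<and> (\<forall>i<n. x $ i \<ge> 0) \<and> tln_fixed_point n W b x}"

definition exc_graph :: "real mat \<Rightarrow> nat set \<Rightarrow> nat \<Rightarrow> nat \<Rightarrow> bool" where
  "exc_graph W E i j \<longleftrightarrow> i \<in> E \<and> j \<in> E \<and> i \<noteq> j \<and> W $$ (j,i) > 0"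

definition uninhibited :: "real mat \<Rightarrow> nat set \<Rightarrow> nat set \<Rightarrow> nat set" where
  "uninhibited W E I = {j\<in>E. \<forall>i\<in>I. W $$ (j,i) = 0}"

definition out_nbhd :: "(nat \<Rightarrow> nat \<Rightarrow> bool) \<Rightarrow> nat set \<Rightarrow> nat set \<Rightarrow> nat set" where
  "out_nbhd G E \<sigma> = (\<Union>i\<in>\<sigma>. {j\<in>E. G i j})"

definition graph_code :: "(nat \<Rightarrow> nat \<Rightarrow> bool) \<Rightarrow> nat set \<Rightarrow> nat set \<Rightarrow> nat set set" where
  "graph_code G E U = {\<sigma>. \<sigma> \<subseteq> E \<and> out_nbhd G E \<sigma> \<inter> U \<subseteq> \<sigma>}"

definition spec_rad :: "real mat \<Rightarrow> real" where
  "spec_rad A = (if dim_row A = 0 then 0 else spectral_radius (map_mat complex_of_real A))"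

end

theory Submission
  imports Defs
begin

text \<open>Write \<open>\<tau> = E\<^sub>U \<inter> \<sigma>\<close>. A vector \<open>x \<ge> 0\<close> is a fixed point for some input \<open>b \<ge> 0\<close> iff
  \<open>W x \<le> x\<close> (take \<open>b = x - W x\<close>). Uninhibited neurons receive only nonnegative input, so if \<open>x\<close> has
  excitatory support \<open>\<sigma>\<close>, an arc from \<open>\<sigma>\<close> into \<open>E\<^sub>U - \<sigma>\<close> would activate its target, and \<open>x\<close>
  restricted to \<open>\<tau>\<close> is a positive vector \<open>y\<close> with \<open>W\<^sub>\<tau> y \<le> y\<close>; since 1 is not an eigenvalue of
  the nonnegative matrix \<open>W\<^sub>\<tau>\<close> (Ground Assumption), this forces \<open>\<rho>(W\<^sub>\<tau>) < 1\<close>. Conversely,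
  \<open>\<rho>(W\<^sub>\<tau>) < 1\<close> lets us solve \<open>z = a + W\<^sub>\<tau> z\<close> with \<open>z > 0\<close> for any positive \<open>a\<close>; the rest of
  \<open>\<sigma>\<close> fires at rate 1, and strong enough inhibitory activity silences every inhibited excitatory
  neuron.\<close>

lemma mult_mat_vec_index_sum:
  fixes A :: "'a::comm_semiring_0 mat"
  assumes "A \<in> carrier_mat n m" "v \<in> carrier_vec m" "i < n"
  shows "(A *\<^sub>v v) $ i = (\<Sum>j<m. A $$ (i,j) * v $ j)"
  using assms by (auto simp: mult_mat_vec_def scalar_prod_def lessThan_atLeast0 intro!: sum.cong)

lemma mult_mat_vec_index_sum_support:
  fixes A :: "'a::comm_semiring_0 mat"
  assumes "A \<in> carrier_mat n m" "v \<in> carrier_vec m" "i < n"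
    and "\<sigma> \<subseteq> {..<m}" "\<And>k. k < m \<Longrightarrow> k \<notin> \<sigma> \<Longrightarrow> v $ k = 0"
  shows "(A *\<^sub>v v) $ i = (\<Sum>k\<in>\<sigma>. A $$ (i,k) * v $ k)"
proof -
  have "(\<Sum>k<m. A $$ (i,k) * v $ k) = (\<Sum>k\<in>\<sigma>. A $$ (i,k) * v $ k)"
    by (rule sum.mono_neutral_right) (use assms(4,5) in auto)
  then show ?thesis using mult_mat_vec_index_sum[OF assms(1-3)] by simp
qed

lemma fixed_vector_eq_0_if_det_one_minus_nonzero:
  fixes B :: "'a::field mat"
  assumes B: "B \<in> carrier_mat m m" and det: "det (1\<^sub>m m - B) \<noteq> 0"
    and v: "v \<in> carrier_vec m" "B *\<^sub>v v = v"
  shows "v = 0\<^sub>v m"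
proof -
  have IB: "1\<^sub>m m - B \<in> carrier_mat m m" using B by (intro minus_carrier_mat) auto
  have "(1\<^sub>m m - B) *\<^sub>v v = 1\<^sub>m m *\<^sub>v v - B *\<^sub>v v"
    by (rule minus_mult_distrib_mat_vec[OF one_carrier_mat B v(1)])
  also have "\<dots> = 0\<^sub>v m" using v by simp
  finally show ?thesis
    using det det_0_iff_vec_prod_zero_field[OF IB] v(1) by blast
qed

lemma affine_fixed_point_if_det_one_minus_nonzero:
  fixes B :: "'a::field mat"
  assumes B: "B \<in> carrier_mat m m" and det: "det (1\<^sub>m m - B) \<noteq> 0"
    and a: "a \<in> carrier_vec m"
  obtains y where "y \<in> carrier_vec m" "y = a + B *\<^sub>v y"
proof -
  have IB: "1\<^sub>m m - B \<in> carrier_mat m m" using B by (intro minus_carrier_mat) auto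
  obtain C where C: "C \<in> carrier_mat m m" "(1\<^sub>m m - B) * C = 1\<^sub>m m"
    using det_non_zero_imp_unit[OF IB det, of "()"]
    unfolding Units_def by (auto simp: ring_mat_def)
  define y where "y = C *\<^sub>v a"
  have y: "y \<in> carrier_vec m" using C a by (simp add: y_def)
  have "1\<^sub>m m *\<^sub>v y - B *\<^sub>v y = (1\<^sub>m m - B) *\<^sub>v y"
    by (rule minus_mult_distrib_mat_vec[OF one_carrier_mat B y, symmetric])
  also have "\<dots> = ((1\<^sub>m m - B) * C) *\<^sub>v a"
    unfolding y_def by (rule assoc_mult_mat_vec[symmetric, OF IB C(1) a])
  also have "\<dots> = a" using C(2) a by simp
  finally have "y - B *\<^sub>v y = a" using y by simp
  then have "y = a + B *\<^sub>v y" using y B by auto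
  with y show ?thesis by (rule that)
qed

lemma pow_mat_Suc_left:
  fixes B :: "'a::semiring_1 mat"
  assumes B: "B \<in> carrier_mat m m"
  shows "B ^\<^sub>m Suc k = B * B ^\<^sub>m k"
proof (induction k)
  case 0 then show ?case using B by simp
next
  case (Suc k)
  have "B ^\<^sub>m Suc (Suc k) = (B * B ^\<^sub>m k) * B" using Suc by simp
  also have "\<dots> = B * (B ^\<^sub>m k * B)" by (rule assoc_mult_mat) (use B in auto)
  finally show ?case by simp
qed

lemma nonneg_mat_iteration_fixed_point:
  fixes B :: "real mat" and s :: "nat \<Rightarrow> nat \<Rightarrow> real"
  assumes nonneg: "\<And>i j. i < m \<Longrightarrow> j < m \<Longrightarrow> B $$ (i,j) \<ge> 0"
    and step: "\<And>k i. i < m \<Longrightarrow> s (Suc k) i = a i + (\<Sum>j<m. B $$ (i,j) * s k j)"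
    and start: "\<And>i. i < m \<Longrightarrow> s 0 i \<le> s 1 i"
    and bounded: "\<And>k i. i < m \<Longrightarrow> s k i \<le> M i"
  shows "\<exists>z. (\<forall>i<m. z i = a i + (\<Sum>j<m. B $$ (i,j) * z j)) \<and> (\<forall>k. \<forall>i<m. s k i \<le> z i)"
proof -
  have mono: "\<forall>i<m. s k i \<le> s (Suc k) i" for k
  proof (induction k)
    case 0 then show ?case using start by simp
  next
    case (Suc k)
    have "(\<Sum>j<m. B $$ (i,j) * s k j) \<le> (\<Sum>j<m. B $$ (i,j) * s (Suc k) j)" if "i < m" for i
      by (intro sum_mono mult_left_mono) (use Suc nonneg that in auto)
    then show ?case by (simp add: step)
  qed
  have "\<exists>l. (\<lambda>k. s k i) \<longlonglongrightarrow> l" if i: "i < m" for i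
  proof (rule incseq_convergent)
    show "incseq (\<lambda>k. s k i)" by (rule incseq_SucI) (use mono i in auto)
    show "\<forall>k. s k i \<le> M i" using bounded i by auto
  qed blast
  then obtain z where z: "\<And>i. i < m \<Longrightarrow> (\<lambda>k. s k i) \<longlonglongrightarrow> z i" by metis
  have "z i = a i + (\<Sum>j<m. B $$ (i,j) * z j) \<and> (\<forall>k. s k i \<le> z i)" if i: "i < m" for i
  proof (intro conjI allI)
    have "(\<lambda>k. s (Suc k) i) \<longlonglongrightarrow> a i + (\<Sum>j<m. B $$ (i,j) * z j)"
      unfolding step[OF i] by (intro tendsto_intros) (use z in auto)
    moreover have "(\<lambda>k. s (Suc k) i) \<longlonglongrightarrow> z i" using z[OF i] LIMSEQ_Suc by blast
    ultimately show "z i = a i + (\<Sum>j<m. B $$ (i,j) * z j)" by (rule LIMSEQ_unique[symmetric])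
    have "incseq (\<lambda>k. s k i)" by (rule incseq_SucI) (use mono i in auto)
    then show "s k i \<le> z i" for k using z[OF i] by (rule incseq_le)
  qed
  then show ?thesis by blast
qed

lemma nonneg_mat_iterates_le_if_subinvariant:
  fixes B :: "real mat" and y :: "real vec"
  assumes B: "B \<in> carrier_mat m m"
    and nonneg: "\<And>i j. i < m \<Longrightarrow> j < m \<Longrightarrow> B $$ (i,j) \<ge> 0"
    and y: "y \<in> carrier_vec m" "\<And>i. i < m \<Longrightarrow> (B *\<^sub>v y) $ i \<le> y $ i"
    and c: "c \<ge> 0" and w: "\<And>i. i < m \<Longrightarrow> w i \<le> c * y $ i"
    and i: "i < m"
  shows "((\<lambda>u i. \<Sum>j<m. B $$ (i,j) * u j) ^^ k) w i \<le> c * y $ i"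
  using i
proof (induction k arbitrary: i)
  case 0 then show ?case using w by simp
next
  case (Suc k)
  let ?s = "((\<lambda>u i. \<Sum>j<m. B $$ (i,j) * u j) ^^ k) w"
  have "((\<lambda>u i. \<Sum>j<m. B $$ (i,j) * u j) ^^ Suc k) w i = (\<Sum>j<m. B $$ (i,j) * ?s j)" by simp
  also have "\<dots> \<le> (\<Sum>j<m. B $$ (i,j) * (c * y $ j))"
    by (intro sum_mono mult_left_mono) (use Suc nonneg in auto)
  also have "\<dots> = c * (B *\<^sub>v y) $ i"
    using mult_mat_vec_index_sum[OF B y(1) Suc.prems] by (simp add: sum_distrib_left mult_ac)
  also have "\<dots> \<le> c * y $ i" using y(2)[OF Suc.prems] c by (simp add: mult_left_mono)
  finally show ?case .
qed

text \<open>The iterates \<open>B\<^sup>k w\<close> increase and stay below a multiple of \<open>y\<close>; their limit is a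
  fixed vector.\<close>
lemma nonneg_mat_fixed_vector_if_superinvariant:
  fixes B :: "real mat" and y :: "real vec"
  assumes B: "B \<in> carrier_mat m m"
    and nonneg: "\<And>i j. i < m \<Longrightarrow> j < m \<Longrightarrow> B $$ (i,j) \<ge> 0"
    and y: "y \<in> carrier_vec m" "\<And>i. i < m \<Longrightarrow> y $ i > 0" "\<And>i. i < m \<Longrightarrow> (B *\<^sub>v y) $ i \<le> y $ i"
    and w: "\<And>i. i < m \<Longrightarrow> w i \<ge> 0" "\<And>i. i < m \<Longrightarrow> w i \<le> (\<Sum>j<m. B $$ (i,j) * w j)"
    and i0: "i0 < m" "w i0 > 0"
  shows "\<exists>v\<in>carrier_vec m. v \<noteq> 0\<^sub>v m \<and> B *\<^sub>v v = v"
proof -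
  define s where "s k = ((\<lambda>u i. \<Sum>j<m. B $$ (i,j) * u j) ^^ k) w" for k
  have step: "s (Suc k) i = 0 + (\<Sum>j<m. B $$ (i,j) * s k j)" for k i
    by (simp add: s_def)
  define c where "c = (\<Sum>i<m. w i / y $ i)"
  have c: "c \<ge> 0" unfolding c_def by (intro sum_nonneg) (use w y in \<open>auto intro: divide_nonneg_pos\<close>)
  have w_le: "w i \<le> c * y $ i" if "i < m" for i
  proof -
    have "w i / y $ i \<le> c"
      unfolding c_def by (rule member_le_sum) (use that w y in \<open>auto intro: divide_nonneg_pos\<close>)
    then show ?thesis using y(2)[OF that] by (simp add: divide_le_eq)
  qed
  have bounded: "s k i \<le> c * y $ i" if "i < m" for k i
    unfolding s_def by (rule nonneg_mat_iterates_le_if_subinvariant[OF B nonneg y(1,3) c w_le that])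
  have start: "s 0 i \<le> s 1 i" if "i < m" for i using w(2)[OF that] by (simp add: s_def)
  obtain z where z: "\<And>i. i < m \<Longrightarrow> z i = 0 + (\<Sum>j<m. B $$ (i,j) * z j)"
    and above: "\<And>k i. i < m \<Longrightarrow> s k i \<le> z i"
    using nonneg_mat_iteration_fixed_point[where m=m and B=B and s=s and a="\<lambda>_. 0" and
        M="\<lambda>i. c * y $ i", OF nonneg step start bounded] by blast
  have "B *\<^sub>v vec m z = vec m z"
  proof (rule eq_vecI)
    fix i assume "i < dim_vec (vec m z)"
    then have i: "i < m" by simp
    have "(B *\<^sub>v vec m z) $ i = (\<Sum>j<m. B $$ (i,j) * z j)"
      using mult_mat_vec_index_sum[OF B vec_carrier i] by simp
    also have "\<dots> = vec m z $ i" using z[OF i] i by simp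
    finally show "(B *\<^sub>v vec m z) $ i = vec m z $ i" .
  qed (use B in simp)
  moreover have "vec m z \<noteq> 0\<^sub>v m"
  proof -
    have "vec m z $ i0 \<noteq> 0" using above[OF i0(1), of 0] i0 by (simp add: s_def)
    then show ?thesis using i0(1) by (metis index_zero_vec(1))
  qed
  ultimately show ?thesis using vec_carrier by blast
qed

lemma spec_rad_less_1_if_subinvariant:
  fixes B :: "real mat" and y :: "real vec"
  assumes B: "B \<in> carrier_mat m m"
    and nonneg: "\<And>i j. i < m \<Longrightarrow> j < m \<Longrightarrow> B $$ (i,j) \<ge> 0"
    and y: "y \<in> carrier_vec m" "\<And>i. i < m \<Longrightarrow> y $ i > 0" "\<And>i. i < m \<Longrightarrow> (B *\<^sub>v y) $ i \<le> y $ i"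
    and det: "det (1\<^sub>m m - B) \<noteq> 0"
  shows "spec_rad B < 1"
proof (cases "m = 0")
  case True then show ?thesis using B by (simp add: spec_rad_def)
next
  case False
  let ?Bc = "map_mat complex_of_real B"
  have Bc: "?Bc \<in> carrier_mat m m" using B by simp
  from spectral_radius_mem_max(1)[OF Bc] False obtain ev where
    ev: "eigenvalue ?Bc ev" and sr: "spec_rad B = cmod ev"
    using B by (auto simp: spectrum_def spec_rad_def)
  then obtain v where v: "v \<in> carrier_vec m" "v \<noteq> 0\<^sub>v m" "?Bc *\<^sub>v v = ev \<cdot>\<^sub>v v"
    using B unfolding eigenvalue_def eigenvector_def by auto
  obtain i0 where i0: "i0 < m" "v $ i0 \<noteq> 0"
    using v(1,2) by (metis eq_vecI carrier_vecD index_zero_vec(1,2))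
  show ?thesis
  proof (rule ccontr)
    assume "\<not> spec_rad B < 1"
    then have ev1: "cmod ev \<ge> 1" using sr by simp
    define w where "w i = cmod (v $ i)" for i
    have "w i \<le> (\<Sum>j<m. B $$ (i,j) * w j)" if i: "i < m" for i
    proof -
      have "w i \<le> cmod ev * w i" using ev1 by (simp add: w_def mult_le_cancel_right1)
      also have "\<dots> = cmod ((?Bc *\<^sub>v v) $ i)" using v i by (simp add: w_def norm_mult)
      also have "\<dots> = cmod (\<Sum>j<m. ?Bc $$ (i,j) * v $ j)"
        using mult_mat_vec_index_sum[OF Bc v(1) i] by simp
      also have "\<dots> \<le> (\<Sum>j<m. cmod (?Bc $$ (i,j) * v $ j))" by (rule norm_sum)
      also have "\<dots> = (\<Sum>j<m. B $$ (i,j) * w j)"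
        using B i nonneg by (intro sum.cong) (auto simp: w_def norm_mult)
      finally show ?thesis .
    qed
    then obtain u where "u \<in> carrier_vec m" "u \<noteq> 0\<^sub>v m" "B *\<^sub>v u = u"
      using nonneg_mat_fixed_vector_if_superinvariant[OF B nonneg y, of w i0] i0
      by (auto simp: w_def)
    then show False using fixed_vector_eq_0_if_det_one_minus_nonzero[OF B det] by blast
  qed
qed

lemma spec_rad_less_1_pow_bounded:
  fixes B :: "real mat"
  assumes B: "B \<in> carrier_mat m m" and sr: "spec_rad B < 1"
  obtains c where "\<And>k i j. i < m \<Longrightarrow> j < m \<Longrightarrow> \<bar>(B ^\<^sub>m k) $$ (i,j)\<bar> \<le> c"
proof (cases "m = 0")
  case False
  let ?Bc = "map_mat complex_of_real B"
  have Bc: "?Bc \<in> carrier_mat m m" using B by simp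
  have "spectral_radius ?Bc < 1" using sr B False by (simp add: spec_rad_def)
  from spectral_radius_jnf_norm_bound_less_1_upper_triangular[OF Bc this]
  obtain c where c: "\<And>k. norm_bound (?Bc ^\<^sub>m k) c" by auto
  have "\<bar>(B ^\<^sub>m k) $$ (i,j)\<bar> \<le> c" if "i < m" "j < m" for k i j
  proof -
    have "?Bc ^\<^sub>m k = map_mat complex_of_real (B ^\<^sub>m k)"
      by (rule of_real_hom.mat_hom_pow[OF B, symmetric])
    then have "(?Bc ^\<^sub>m k) $$ (i,j) = complex_of_real ((B ^\<^sub>m k) $$ (i,j))"
      using that pow_mat_dim_square[OF B, of k] by simp
    moreover have "norm ((?Bc ^\<^sub>m k) $$ (i,j)) \<le> c"
      using c[of k] that pow_mat_dim_square[OF Bc, of k] unfolding norm_bound_def by simp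
    ultimately show ?thesis by simp
  qed
  then show thesis by (rule that)
qed (rule that, simp)

lemma affine_iterates_eq_diff_pow:
  fixes B :: "real mat"
  assumes B: "B \<in> carrier_mat m m" and y: "y \<in> carrier_vec m" "y = vec m a + B *\<^sub>v y" and i: "i < m"
  shows "((\<lambda>u i. a i + (\<Sum>j<m. B $$ (i,j) * u j)) ^^ k) (\<lambda>_. 0) i = y $ i - (B ^\<^sub>m k *\<^sub>v y) $ i"
  using i
proof (induction k arbitrary: i)
  case 0 then show ?case using y(1) B by simp
next
  case (Suc k)
  let ?S = "((\<lambda>u i. a i + (\<Sum>j<m. B $$ (i,j) * u j)) ^^ k) (\<lambda>_. 0)"
  have Bk: "B ^\<^sub>m k *\<^sub>v y \<in> carrier_vec m" by (rule mult_mat_vec_carrier[OF pow_carrier_mat[OF B] y(1)])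
  have "a i + (\<Sum>j<m. B $$ (i,j) * ?S j) = a i + (\<Sum>j<m. B $$ (i,j) * (y $ j - (B ^\<^sub>m k *\<^sub>v y) $ j))"
    using Suc.IH by simp
  also have "\<dots> = a i + (B *\<^sub>v y) $ i - (B *\<^sub>v (B ^\<^sub>m k *\<^sub>v y)) $ i"
    using mult_mat_vec_index_sum[OF B y(1) Suc.prems] mult_mat_vec_index_sum[OF B Bk Suc.prems]
    by (simp add: right_diff_distrib sum_subtractf)
  also have "a i + (B *\<^sub>v y) $ i = y $ i"
    using arg_cong[OF y(2), of "\<lambda>v. v $ i"] Suc.prems B by simp
  also have "B *\<^sub>v (B ^\<^sub>m k *\<^sub>v y) = B ^\<^sub>m Suc k *\<^sub>v y"
    unfolding pow_mat_Suc_left[OF B] by (rule assoc_mult_mat_vec[OF B pow_carrier_mat[OF B] y(1), symmetric])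
  finally show ?case by simp
qed

text \<open>The iterates \<open>S k\<close> are the partial sums of the Neumann series of \<open>a\<close>: they increase and,
  being equal to \<open>y - B\<^sup>k y\<close> for the solution \<open>y\<close> of \<open>y = a + B y\<close>, stay bounded.\<close>
lemma nonneg_mat_positive_solution:
  fixes B :: "real mat"
  assumes B: "B \<in> carrier_mat m m"
    and nonneg: "\<And>i j. i < m \<Longrightarrow> j < m \<Longrightarrow> B $$ (i,j) \<ge> 0"
    and sr: "spec_rad B < 1" and det: "det (1\<^sub>m m - B) \<noteq> 0"
    and a: "\<And>i. i < m \<Longrightarrow> a i > 0"
  shows "\<exists>z. \<forall>i<m. z i > 0 \<and> z i = a i + (\<Sum>j<m. B $$ (i,j) * z j)"
proof -
  obtain c where c: "\<And>k i j. i < m \<Longrightarrow> j < m \<Longrightarrow> \<bar>(B ^\<^sub>m k) $$ (i,j)\<bar> \<le> c"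
    using spec_rad_less_1_pow_bounded[OF B sr] by blast
  obtain y where y: "y \<in> carrier_vec m" "y = vec m a + B *\<^sub>v y"
    by (rule affine_fixed_point_if_det_one_minus_nonzero[OF B det vec_carrier])
  define S where "S k = ((\<lambda>u i. a i + (\<Sum>j<m. B $$ (i,j) * u j)) ^^ k) (\<lambda>_. 0)" for k
  have step: "S (Suc k) i = a i + (\<Sum>j<m. B $$ (i,j) * S k j)" for k i
    by (simp add: S_def)
  have bounded: "S k i \<le> \<bar>y $ i\<bar> + (\<Sum>j<m. c * \<bar>y $ j\<bar>)" if i: "i < m" for k i
  proof -
    have "\<bar>(B ^\<^sub>m k *\<^sub>v y) $ i\<bar> = \<bar>\<Sum>j<m. (B ^\<^sub>m k) $$ (i,j) * y $ j\<bar>"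
      using mult_mat_vec_index_sum[OF pow_carrier_mat[OF B] y(1) i] by simp
    also have "\<dots> \<le> (\<Sum>j<m. \<bar>(B ^\<^sub>m k) $$ (i,j) * y $ j\<bar>)" by (rule sum_abs)
    also have "\<dots> \<le> (\<Sum>j<m. c * \<bar>y $ j\<bar>)"
      by (intro sum_mono) (use c i in \<open>auto simp: abs_mult intro: mult_right_mono\<close>)
    finally have "\<bar>(B ^\<^sub>m k *\<^sub>v y) $ i\<bar> \<le> (\<Sum>j<m. c * \<bar>y $ j\<bar>)" .
    moreover have "S k i = y $ i - (B ^\<^sub>m k *\<^sub>v y) $ i"
      unfolding S_def by (rule affine_iterates_eq_diff_pow[OF B y i])
    ultimately show ?thesis using abs_ge_self[of "y $ i"] by linarith
  qed
  have start: "S 0 i \<le> S 1 i" if "i < m" for i using a[OF that] by (simp add: S_def)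
  obtain z where z: "\<forall>i<m. z i = a i + (\<Sum>j<m. B $$ (i,j) * z j)" and above: "\<forall>k. \<forall>i<m. S k i \<le> z i"
    using nonneg_mat_iteration_fixed_point[where m=m and B=B and s=S and a=a and
        M="\<lambda>i. \<bar>y $ i\<bar> + (\<Sum>j<m. c * \<bar>y $ j\<bar>)", OF nonneg step start bounded] by blast
  have "z i > 0" if i: "i < m" for i
  proof -
    have "S 1 i \<le> z i" using above i by blast
    then show ?thesis using a[OF i] by (simp add: S_def)
  qed
  with z show ?thesis by blast
qed

lemma bij_betw_pick:
  assumes "finite \<tau>"
  shows "bij_betw (pick \<tau>) {..<card \<tau>} \<tau>"
proof (rule bij_betw_byWitness[where f'="\<lambda>k. card {z\<in>\<tau>. z < k}"])
  show "\<forall>a\<in>{..<card \<tau>}. card {z\<in>\<tau>. z < pick \<tau> a} = a" using card_pick by auto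
  show "\<forall>k\<in>\<tau>. pick \<tau> (card {z\<in>\<tau>. z < k}) = k" using pick_card_in_set by blast
  show "pick \<tau> ` {..<card \<tau>} \<subseteq> \<tau>" using pick_in_set by auto
  show "(\<lambda>k. card {z\<in>\<tau>. z < k}) ` \<tau> \<subseteq> {..<card \<tau>}"
    using assms by (auto intro!: psubset_card_mono)
qed

lemma principal_submatrix_carrier:
  assumes "W \<in> carrier_mat n n" "\<tau> \<subseteq> {..<n}"
  shows "principal_submatrix W \<tau> \<in> carrier_mat (card \<tau>) (card \<tau>)"
proof -
  have "{i. i < n \<and> i \<in> \<tau>} = \<tau>" using assms(2) by blast
  then show ?thesis
    using assms(1) unfolding principal_submatrix_def by (intro carrier_matI) (simp_all add: dim_submatrix)
qed

lemma principal_submatrix_index: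
  assumes "W \<in> carrier_mat n n" "\<tau> \<subseteq> {..<n}" "a < card \<tau>" "b < card \<tau>"
  shows "principal_submatrix W \<tau> $$ (a,b) = W $$ (pick \<tau> a, pick \<tau> b)"
proof -
  have "{i. i < n \<and> i \<in> \<tau>} = \<tau>" using assms(2) by blast
  then show ?thesis
    using assms unfolding principal_submatrix_def by (intro submatrix_index) simp_all
qed

lemma sum_principal_submatrix_pick:
  assumes "W \<in> carrier_mat n n" "\<tau> \<subseteq> {..<n}" "a < card \<tau>"
  shows "(\<Sum>b<card \<tau>. principal_submatrix W \<tau> $$ (a,b) * f (pick \<tau> b))
       = (\<Sum>k\<in>\<tau>. W $$ (pick \<tau> a, k) * f k)"
proof -
  have "finite \<tau>" using assms(2) finite_subset by blast
  then have "(\<Sum>k\<in>\<tau>. W $$ (pick \<tau> a, k) * f k) = (\<Sum>b<card \<tau>. W $$ (pick \<tau> a, pick \<tau> b) * f (pick \<tau> b))"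
    by (rule sum.reindex_bij_betw[OF bij_betw_pick, symmetric])
  then show ?thesis using principal_submatrix_index[OF assms(1,2,3)] by simp
qed

lemma principal_submatrix_one_minus:
  fixes W :: "'a::ring_1 mat"
  assumes W: "W \<in> carrier_mat n n" and \<tau>: "\<tau> \<subseteq> {..<n}"
  shows "principal_submatrix (1\<^sub>m n - W) \<tau> = 1\<^sub>m (card \<tau>) - principal_submatrix W \<tau>"
proof (rule eq_matI)
  have IW: "1\<^sub>m n - W \<in> carrier_mat n n" using W by (intro minus_carrier_mat) auto
  note carriers = principal_submatrix_carrier[OF IW \<tau>] principal_submatrix_carrier[OF W \<tau>]
  then show "dim_row (principal_submatrix (1\<^sub>m n - W) \<tau>) = dim_row (1\<^sub>m (card \<tau>) - principal_submatrix W \<tau>)"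
    and "dim_col (principal_submatrix (1\<^sub>m n - W) \<tau>) = dim_col (1\<^sub>m (card \<tau>) - principal_submatrix W \<tau>)"
    by auto
  fix a b assume "a < dim_row (1\<^sub>m (card \<tau>) - principal_submatrix W \<tau>)"
    "b < dim_col (1\<^sub>m (card \<tau>) - principal_submatrix W \<tau>)"
  then have ab: "a < card \<tau>" "b < card \<tau>" using carriers by auto
  have "finite \<tau>" using \<tau> finite_subset by blast
  then have "pick \<tau> a = pick \<tau> b \<longleftrightarrow> a = b"
    using bij_betw_imp_inj_on[OF bij_betw_pick] ab by (auto dest: inj_onD)
  moreover have "pick \<tau> a < n" "pick \<tau> b < n" using pick_in_set ab \<tau> by blast+
  ultimately show "principal_submatrix (1\<^sub>m n - W) \<tau> $$ (a, b) = (1\<^sub>m (card \<tau>) - principal_submatrix W \<tau>) $$ (a, b)"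
    using principal_submatrix_index[OF IW \<tau> ab] principal_submatrix_index[OF W \<tau> ab] carriers ab W
    by simp
qed

lemma ground_assumption_det_one_minus_principal_submatrix:
  assumes ga: "ground_assumption n W" and W: "W \<in> carrier_mat n n" and \<tau>: "\<tau> \<subseteq> {..<n}"
  shows "det (1\<^sub>m (card \<tau>) - principal_submatrix W \<tau>) \<noteq> 0"
proof (cases "\<tau> = {}")
  case True
  have "1\<^sub>m (card \<tau>) - principal_submatrix W \<tau> \<in> carrier_mat 0 0"
    using True principal_submatrix_carrier[OF W \<tau>] by auto
  then show ?thesis by simp
next
  case False
  then have "det (principal_submatrix (1\<^sub>m n - W) \<tau>) \<noteq> 0"
    using ga \<tau> unfolding ground_assumption_def by (auto simp: lessThan_atLeast0)
  then show ?thesis unfolding principal_submatrix_one_minus[OF W \<tau>] .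
qed

lemma dale_matrixD:
  assumes "dale_matrix n W E I"
  shows "W \<in> carrier_mat n n" "E \<union> I = {..<n}" "E \<inter> I = {}"
    and "\<And>i j. i \<in> E \<Longrightarrow> j < n \<Longrightarrow> W $$ (j,i) \<ge> 0"
    and "\<And>i j. i \<in> I \<Longrightarrow> j < n \<Longrightarrow> W $$ (j,i) \<le> 0"
  using assms unfolding dale_matrix_def by (auto simp: atLeast0LessThan)

lemma dale_inhibitory_input_nonpos:
  assumes "dale_matrix n W E I" "j < n" "I' \<subseteq> I"
  shows "(\<Sum>i\<in>I'. W $$ (j,i)) \<le> 0"
  using dale_matrixD(5)[OF assms(1) _ assms(2)] assms(3) by (intro sum_nonpos) blast

lemma dale_inhibitory_input_le_entry:
  assumes dale: "dale_matrix n W E I" and "j < n" "i \<in> I"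
  shows "(\<Sum>i'\<in>I. W $$ (j,i')) \<le> W $$ (j,i)"
proof -
  have "finite I" using dale_matrixD(2)[OF dale] by (metis finite_Un finite_lessThan)
  then have "(\<Sum>i'\<in>I. W $$ (j,i')) = W $$ (j,i) + (\<Sum>i'\<in>I - {i}. W $$ (j,i'))"
    using assms(3) by (rule sum.remove)
  moreover have "(\<Sum>i'\<in>I - {i}. W $$ (j,i')) \<le> 0"
    by (rule dale_inhibitory_input_nonpos[OF dale assms(2)]) blast
  ultimately show ?thesis by linarith
qed

lemma mem_comb_code_iff:
  "\<sigma> \<in> comb_code n W E \<longleftrightarrow>
     (\<exists>x\<in>carrier_vec n. (\<forall>i<n. x $ i \<ge> 0) \<and> (\<forall>i<n. (W *\<^sub>v x) $ i \<le> x $ i) \<and> exc_support E x = \<sigma>)"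
proof
  assume "\<sigma> \<in> comb_code n W E"
  then obtain x b where b: "\<forall>i<n. b $ i \<ge> 0" and x: "x \<in> carrier_vec n" "\<forall>i<n. x $ i \<ge> 0"
    and fp: "tln_fixed_point n W b x" and \<sigma>: "exc_support E x = \<sigma>"
    unfolding comb_code_def by blast
  have "(W *\<^sub>v x) $ i \<le> x $ i" if "i < n" for i
  proof -
    have "(W *\<^sub>v x) $ i \<le> (W *\<^sub>v x) $ i + b $ i" using b that by simp
    also have "\<dots> \<le> x $ i" using fp that unfolding tln_fixed_point_def by simp
    finally show ?thesis .
  qed
  with x \<sigma> show "\<exists>x\<in>carrier_vec n. (\<forall>i<n. x $ i \<ge> 0) \<and> (\<forall>i<n. (W *\<^sub>v x) $ i \<le> x $ i) \<and> exc_support E x = \<sigma>"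
    by blast
next
  assume "\<exists>x\<in>carrier_vec n. (\<forall>i<n. x $ i \<ge> 0) \<and> (\<forall>i<n. (W *\<^sub>v x) $ i \<le> x $ i) \<and> exc_support E x = \<sigma>"
  then obtain x where x: "x \<in> carrier_vec n" "\<forall>i<n. x $ i \<ge> 0" "\<forall>i<n. (W *\<^sub>v x) $ i \<le> x $ i"
    and \<sigma>: "exc_support E x = \<sigma>"
    by blast
  define b where "b = vec n (\<lambda>i. x $ i - (W *\<^sub>v x) $ i)"
  have "tln_fixed_point n W b x" using x unfolding tln_fixed_point_def b_def by simp
  moreover have "b \<in> carrier_vec n" "\<forall>i<n. b $ i \<ge> 0" using x(3) by (auto simp: b_def)
  ultimately show "\<sigma> \<in> comb_code n W E" using x \<sigma> unfolding comb_code_def by blast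
qed

lemma uninhibited_input_nonneg:
  assumes "dale_matrix n W E I" "j \<in> uninhibited W E I" "k < n" "x $ k \<ge> 0"
  shows "W $$ (j,k) * x $ k \<ge> 0"
proof -
  note D = dale_matrixD[OF assms(1)]
  have "j < n" using assms(2) D(2) unfolding uninhibited_def by blast
  moreover have "k \<in> E \<or> k \<in> I" using assms(3) D(2) by blast
  ultimately show ?thesis
    using D(4) assms(2,4) unfolding uninhibited_def by auto
qed

lemma graph_code_if_dominated:
  assumes dale: "dale_matrix n W E I"
    and x: "x \<in> carrier_vec n" "\<forall>i<n. x $ i \<ge> 0" "\<forall>i<n. (W *\<^sub>v x) $ i \<le> x $ i"
  shows "exc_support E x \<in> graph_code (exc_graph W E) E (uninhibited W E I)"
proof -
  note D = dale_matrixD[OF dale]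
  have "j \<in> exc_support E x"
    if j: "j \<in> uninhibited W E I" and i: "i \<in> exc_support E x" "exc_graph W E i j" for i j
  proof -
    have jE: "j \<in> E" and Wji: "W $$ (j,i) > 0" using i(2) unfolding exc_graph_def by auto
    have jn: "j < n" and in': "i < n" using jE i(1) D(2) unfolding exc_support_def by auto
    have "0 < W $$ (j,i) * x $ i" using Wji i(1) unfolding exc_support_def by simp
    also have "\<dots> \<le> (\<Sum>k<n. W $$ (j,k) * x $ k)"
      by (rule member_le_sum) (use uninhibited_input_nonneg[OF dale j] x(2) in' in auto)
    also have "\<dots> = (W *\<^sub>v x) $ j" using mult_mat_vec_index_sum[OF D(1) x(1) jn] by simp
    also have "\<dots> \<le> x $ j" using x(3) jn by blast
    finally show ?thesis using jE unfolding exc_support_def by blast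
  qed
  then show ?thesis unfolding graph_code_def out_nbhd_def exc_support_def by blast
qed

lemma spec_rad_uninhibited_less_1_if_dominated:
  assumes dale: "dale_matrix n W E I" and ga: "ground_assumption n W"
    and x: "x \<in> carrier_vec n" "\<forall>i<n. x $ i \<ge> 0" "\<forall>i<n. (W *\<^sub>v x) $ i \<le> x $ i"
  shows "spec_rad (principal_submatrix W (uninhibited W E I \<inter> exc_support E x)) < 1"
proof -
  note D = dale_matrixD[OF dale]
  define \<tau> where "\<tau> = uninhibited W E I \<inter> exc_support E x"
  define m where "m = card \<tau>"
  define B where "B = principal_submatrix W \<tau>"
  have \<tau>: "\<tau> \<subseteq> {..<n}" using D(2) unfolding \<tau>_def exc_support_def by blast
  have B: "B \<in> carrier_mat m m" unfolding B_def m_def by (rule principal_submatrix_carrier[OF D(1) \<tau>])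
  have pick: "pick \<tau> a \<in> \<tau>" "pick \<tau> a < n" if "a < m" for a
    using pick_in_set[of a \<tau>] that \<tau> unfolding m_def by auto
  have B_index: "B $$ (a,b) = W $$ (pick \<tau> a, pick \<tau> b)" if "a < m" "b < m" for a b
    using principal_submatrix_index[OF D(1) \<tau>] that unfolding B_def m_def by blast
  have nonneg: "B $$ (a,b) \<ge> 0" if "a < m" "b < m" for a b
    using B_index[OF that] D(4) pick[OF that(1)] pick[OF that(2)]
    unfolding \<tau>_def exc_support_def by auto
  define y where "y = vec m (\<lambda>a. x $ pick \<tau> a)"
  have y_pos: "y $ a > 0" if "a < m" for a
    using pick[OF that] that unfolding y_def \<tau>_def exc_support_def by auto
  have "(B *\<^sub>v y) $ a \<le> y $ a" if a: "a < m" for a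
  proof -
    let ?j = "pick \<tau> a"
    have j: "?j \<in> uninhibited W E I" using pick[OF a] unfolding \<tau>_def by blast
    have "(B *\<^sub>v y) $ a = (\<Sum>b<m. B $$ (a,b) * x $ pick \<tau> b)"
      using mult_mat_vec_index_sum[OF B _ a] by (simp add: y_def)
    also have "\<dots> = (\<Sum>k\<in>\<tau>. W $$ (?j, k) * x $ k)"
      unfolding B_def m_def by (rule sum_principal_submatrix_pick[OF D(1) \<tau> a[unfolded m_def]])
    also have "\<dots> \<le> (\<Sum>k<n. W $$ (?j, k) * x $ k)"
      by (rule sum_mono2) (use \<tau> uninhibited_input_nonneg[OF dale j] x(2) in auto)
    also have "\<dots> = (W *\<^sub>v x) $ ?j" using mult_mat_vec_index_sum[OF D(1) x(1) pick(2)[OF a]] by simp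
    also have "\<dots> \<le> y $ a" using x(3) pick(2)[OF a] a by (simp add: y_def)
    finally show ?thesis .
  qed
  moreover have "det (1\<^sub>m m - B) \<noteq> 0"
    unfolding B_def m_def by (rule ground_assumption_det_one_minus_principal_submatrix[OF ga D(1) \<tau>])
  ultimately have "spec_rad B < 1"
    by (intro spec_rad_less_1_if_subinvariant[OF B nonneg _ y_pos]) (auto simp: y_def)
  then show ?thesis unfolding B_def \<tau>_def .
qed

lemma finite_upper_bound_pos:
  fixes f :: "'a \<Rightarrow> real"
  assumes "finite K"
  obtains t where "t > 0" "\<And>k. k \<in> K \<Longrightarrow> f k \<le> t"
proof
  show "1 + (\<Sum>k\<in>K. \<bar>f k\<bar>) > 0" by (simp add: add_pos_nonneg sum_nonneg)
  fix k assume "k \<in> K"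
  then have "\<bar>f k\<bar> \<le> (\<Sum>k\<in>K. \<bar>f k\<bar>)" using assms by (intro member_le_sum) auto
  then show "f k \<le> 1 + (\<Sum>k\<in>K. \<bar>f k\<bar>)" by linarith
qed

lemma ex_pos_bound_scaled_by_negative_entries:
  fixes S :: "nat \<Rightarrow> real" and W :: "real mat"
  obtains t where "t > 0" "\<And>j. j < n \<Longrightarrow> \<bar>S j\<bar> \<le> t"
    "\<And>j i. j < n \<Longrightarrow> i < n \<Longrightarrow> W $$ (j,i) < 0 \<Longrightarrow> \<bar>S j\<bar> \<le> t * - W $$ (j,i)"
proof -
  define bnd where "bnd = (\<lambda>(j,i). \<bar>S j\<bar> + (if W $$ (j,i) < 0 then \<bar>S j\<bar> / - W $$ (j,i) else 0))"
  obtain t where t: "t > 0" and bound: "\<And>p. p \<in> {..<n} \<times> {..<n} \<Longrightarrow> bnd p \<le> t"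
    using finite_upper_bound_pos[OF finite_cartesian_product[OF finite_lessThan finite_lessThan], where f=bnd]
    by blast
  have "\<bar>S j\<bar> \<le> t" if "j < n" for j
  proof -
    have "0 \<le> (if W $$ (j,j) < 0 then \<bar>S j\<bar> / - W $$ (j,j) else 0)"
      by (auto intro: divide_nonneg_neg)
    then show ?thesis using bound[of "(j,j)"] that by (simp add: bnd_def)
  qed
  moreover have "\<bar>S j\<bar> \<le> t * - W $$ (j,i)" if "j < n" "i < n" "W $$ (j,i) < 0" for j i
  proof -
    have w: "- W $$ (j,i) > 0" using that(3) by simp
    have "\<bar>S j\<bar> = \<bar>S j\<bar> / - W $$ (j,i) * - W $$ (j,i)" using w by simp
    also have "\<dots> \<le> t * - W $$ (j,i)"
      using bound[of "(j,i)"] that w by (intro mult_right_mono) (simp_all add: bnd_def)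
    finally show ?thesis .
  qed
  ultimately show thesis using t that by blast
qed

lemma mult_mat_vec_add_const_on:
  fixes W :: "real mat"
  assumes W: "W \<in> carrier_mat n n" and u: "u \<in> carrier_vec n" and I: "I \<subseteq> {..<n}" and j: "j < n"
  shows "(W *\<^sub>v vec n (\<lambda>k. u $ k + (if k \<in> I then t else 0))) $ j
       = (W *\<^sub>v u) $ j + (\<Sum>i\<in>I. W $$ (j,i)) * t"
proof -
  have "(W *\<^sub>v vec n (\<lambda>k. u $ k + (if k \<in> I then t else 0))) $ j
      = (\<Sum>k<n. W $$ (j,k) * u $ k + (if k \<in> I then W $$ (j,k) * t else 0))"
    using mult_mat_vec_index_sum[OF W vec_carrier j] by (auto simp: distrib_left intro: sum.cong)
  also have "\<dots> = (W *\<^sub>v u) $ j + (\<Sum>k\<in>{..<n} \<inter> I. W $$ (j,k) * t)"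
    using mult_mat_vec_index_sum[OF W u j] by (simp add: sum.distrib sum.inter_restrict)
  also have "{..<n} \<inter> I = I" using I by blast
  finally show ?thesis by (simp add: sum_distrib_right)
qed

text \<open>Uninhibited neurons do not see the inhibitory population, so raising all inhibitory rates to a
  large common value \<open>t\<close> keeps the dominance there and enforces it everywhere else.\<close>
lemma dominated_extension_by_inhibition:
  assumes dale: "dale_matrix n W E I"
    and u: "u \<in> carrier_vec n" "\<forall>i<n. u $ i \<ge> 0" "\<forall>i\<in>I. u $ i = 0"
    and dom: "\<forall>j\<in>uninhibited W E I. (W *\<^sub>v u) $ j \<le> u $ j"
  shows "\<exists>x\<in>carrier_vec n. (\<forall>i<n. x $ i \<ge> 0) \<and> (\<forall>i<n. (W *\<^sub>v x) $ i \<le> x $ i) \<and>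
           exc_support E x = exc_support E u"
proof -
  note D = dale_matrixD[OF dale]
  define S where "S j = (W *\<^sub>v u) $ j" for j
  obtain t where t: "t > 0" and S_le: "\<And>j. j < n \<Longrightarrow> \<bar>S j\<bar> \<le> t"
    and S_le_inh: "\<And>j i. j < n \<Longrightarrow> i < n \<Longrightarrow> W $$ (j,i) < 0 \<Longrightarrow> \<bar>S j\<bar> \<le> t * - W $$ (j,i)"
    using ex_pos_bound_scaled_by_negative_entries[of n S W] by blast
  define x where "x = vec n (\<lambda>k. u $ k + (if k \<in> I then t else 0))"
  have x: "x \<in> carrier_vec n" by (simp add: x_def)
  have x_index: "x $ k = u $ k + (if k \<in> I then t else 0)" if "k < n" for k
    using that by (simp add: x_def)
  have Wx: "(W *\<^sub>v x) $ j = S j + (\<Sum>i\<in>I. W $$ (j,i)) * t" if "j < n" for j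
    unfolding x_def S_def using D(2) by (intro mult_mat_vec_add_const_on[OF D(1) u(1) _ that]) blast
  have "(W *\<^sub>v x) $ j \<le> x $ j" if j: "j < n" for j
  proof -
    consider "j \<in> uninhibited W E I" | "j \<in> I" | "j \<in> E" "j \<notin> uninhibited W E I"
      using j D(2) by blast
    then show ?thesis
    proof cases
      case 1
      then have "(\<Sum>i\<in>I. W $$ (j,i)) = 0" "j \<notin> I"
        using D(3) unfolding uninhibited_def by auto
      then show ?thesis using Wx[OF j] x_index[OF j] dom 1 unfolding S_def by simp
    next
      case 2
      have "(\<Sum>i\<in>I. W $$ (j,i)) * t \<le> 0"
        using dale_inhibitory_input_nonpos[OF dale j, of I] t by (simp add: mult_nonpos_nonneg)
      then have "(W *\<^sub>v x) $ j \<le> \<bar>S j\<bar>" using Wx[OF j] by linarith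
      also have "\<dots> \<le> x $ j" using x_index[OF j] u(3) S_le[OF j] 2 by simp
      finally show ?thesis .
    next
      case 3
      then have "\<not> (\<forall>i\<in>I. W $$ (j,i) = 0)" unfolding uninhibited_def by blast
      then obtain i where i: "i \<in> I" "W $$ (j,i) \<noteq> 0" by blast
      have i_n: "i < n" using i(1) D(2) by blast
      have Wji: "W $$ (j,i) < 0" using D(5)[OF i(1) j] i(2) by linarith
      have "(\<Sum>i'\<in>I. W $$ (j,i')) \<le> W $$ (j,i)" by (rule dale_inhibitory_input_le_entry[OF dale j i(1)])
      then have "(\<Sum>i'\<in>I. W $$ (j,i')) * t \<le> W $$ (j,i) * t"
        using t by (intro mult_right_mono) simp_all
      then have "(W *\<^sub>v x) $ j \<le> S j + W $$ (j,i) * t" using Wx[OF j] by linarith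
      also have "\<dots> \<le> 0" using S_le_inh[OF j i_n Wji] by (simp add: mult.commute)
      also have "\<dots> \<le> x $ j" using x_index[OF j] u(2) j t by (simp add: add_nonneg_nonneg)
      finally show ?thesis .
    qed
  qed
  moreover have "x $ k = u $ k" if "k \<in> E" for k
  proof -
    have "k < n" "k \<notin> I" using that D(2,3) by auto
    then show ?thesis using x_index by simp
  qed
  then have "exc_support E x = exc_support E u" unfolding exc_support_def by auto
  moreover have "\<forall>i<n. x $ i \<ge> 0" using x_index u(2) t by simp
  ultimately show ?thesis using x by blast
qed

lemma principal_submatrix_positive_solution:
  fixes W :: "real mat"
  assumes W: "W \<in> carrier_mat n n" and \<tau>: "\<tau> \<subseteq> {..<n}"
    and nonneg: "\<And>j k. j \<in> \<tau> \<Longrightarrow> k \<in> \<tau> \<Longrightarrow> W $$ (j,k) \<ge> 0"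
    and sr: "spec_rad (principal_submatrix W \<tau>) < 1"
    and det: "det (1\<^sub>m (card \<tau>) - principal_submatrix W \<tau>) \<noteq> 0"
    and a: "\<And>j. j \<in> \<tau> \<Longrightarrow> a j > 0"
  shows "\<exists>r. \<forall>j\<in>\<tau>. r j > 0 \<and> r j = a j + (\<Sum>k\<in>\<tau>. W $$ (j,k) * r k)"
proof -
  define m where "m = card \<tau>"
  define B where "B = principal_submatrix W \<tau>"
  have B: "B \<in> carrier_mat m m" unfolding B_def m_def by (rule principal_submatrix_carrier[OF W \<tau>])
  have bij: "bij_betw (pick \<tau>) {..<m} \<tau>"
    unfolding m_def by (rule bij_betw_pick) (use \<tau> in \<open>auto intro: finite_subset\<close>)
  have pick: "pick \<tau> b \<in> \<tau>" if "b < m" for b using bij_betw_apply[OF bij] that by auto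
  have B_nonneg: "B $$ (b,c) \<ge> 0" if "b < m" "c < m" for b c
    using principal_submatrix_index[OF W \<tau>] nonneg pick that unfolding B_def m_def by auto
  obtain z where z: "\<forall>b<m. z b > 0 \<and> z b = a (pick \<tau> b) + (\<Sum>c<m. B $$ (b,c) * z c)"
    using nonneg_mat_positive_solution[where a="\<lambda>b. a (pick \<tau> b)", OF B B_nonneg] sr det a pick
    unfolding B_def m_def by blast
  define idx where "idx = inv_into {..<m} (pick \<tau>)"
  have idx: "idx k < m" "pick \<tau> (idx k) = k" if "k \<in> \<tau>" for k
    using bij_betw_apply[OF bij_betw_inv_into[OF bij]] bij_betw_inv_into_right[OF bij] that
    unfolding idx_def by auto
  have idx_pick: "idx (pick \<tau> b) = b" if "b < m" for b
    using bij_betw_inv_into_left[OF bij] that unfolding idx_def by auto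
  have "z (idx j) > 0 \<and> z (idx j) = a j + (\<Sum>k\<in>\<tau>. W $$ (j,k) * z (idx k))" if j: "j \<in> \<tau>" for j
  proof -
    have "(\<Sum>c<m. B $$ (idx j, c) * z c) = (\<Sum>c<m. B $$ (idx j, c) * z (idx (pick \<tau> c)))"
      using idx_pick by simp
    also have "\<dots> = (\<Sum>k\<in>\<tau>. W $$ (j,k) * z (idx k))"
      using sum_principal_submatrix_pick[OF W \<tau> idx(1)[OF j, unfolded m_def]] idx(2)[OF j]
      unfolding B_def m_def by simp
    finally have sum_eq: "(\<Sum>c<m. B $$ (idx j, c) * z c) = (\<Sum>k\<in>\<tau>. W $$ (j,k) * z (idx k))" .
    from z idx(1)[OF j] have "z (idx j) > 0 \<and> z (idx j) = a (pick \<tau> (idx j)) + (\<Sum>c<m. B $$ (idx j, c) * z c)"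
      by blast
    then show ?thesis unfolding idx(2)[OF j] sum_eq .
  qed
  then show ?thesis by (intro exI[of _ "\<lambda>k. z (idx k)"]) blast
qed

lemma no_excitation_into_uninhibited_if_graph_code:
  assumes "\<sigma> \<in> graph_code (exc_graph W E) E (uninhibited W E I)"
    and "j \<in> uninhibited W E I" "j \<notin> \<sigma>" "k \<in> \<sigma>"
  shows "W $$ (j,k) \<le> 0"
proof (rule ccontr)
  assume "\<not> W $$ (j,k) \<le> 0"
  then have "j \<in> out_nbhd (exc_graph W E) E \<sigma> \<inter> uninhibited W E I"
    using assms unfolding graph_code_def out_nbhd_def exc_graph_def uninhibited_def by auto
  then show False using assms unfolding graph_code_def by blast
qed

lemma uninhibited_rates_if_spec_rad:
  assumes dale: "dale_matrix n W E I" and ga: "ground_assumption n W" and \<sigma>E: "\<sigma> \<subseteq> E"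
    and \<tau>_def: "\<tau> = uninhibited W E I \<inter> \<sigma>" and sr: "spec_rad (principal_submatrix W \<tau>) < 1"
  shows "\<exists>r. \<forall>j\<in>\<tau>. r j > 0 \<and> r j = 1 + (\<Sum>l\<in>\<sigma> - \<tau>. W $$ (j,l)) + (\<Sum>k\<in>\<tau>. W $$ (j,k) * r k)"
proof -
  note D = dale_matrixD[OF dale]
  have \<tau>: "\<tau> \<subseteq> {..<n}" using \<sigma>E D(2) unfolding \<tau>_def by blast
  have "1 + (\<Sum>l\<in>\<sigma> - \<tau>. W $$ (j,l)) > 0" if "j \<in> \<tau>" for j
  proof -
    have "(\<Sum>l\<in>\<sigma> - \<tau>. W $$ (j,l)) \<ge> 0" using D(4) \<sigma>E \<tau> that by (intro sum_nonneg) blast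
    then show ?thesis by simp
  qed
  moreover have "W $$ (j,k) \<ge> 0" if "j \<in> \<tau>" "k \<in> \<tau>" for j k
    using D(4) \<sigma>E \<tau> that unfolding \<tau>_def by blast
  moreover have "det (1\<^sub>m (card \<tau>) - principal_submatrix W \<tau>) \<noteq> 0"
    by (rule ground_assumption_det_one_minus_principal_submatrix[OF ga D(1) \<tau>])
  ultimately show ?thesis
    using principal_submatrix_positive_solution[OF D(1) \<tau>, where a="\<lambda>j. 1 + (\<Sum>l\<in>\<sigma> - \<tau>. W $$ (j,l))"] sr
    by blast
qed

text \<open>The rest of \<open>\<sigma>\<close> fires at rate 1, so \<open>W u = u - 1\<close> on \<open>\<tau>\<close>; on \<open>E\<^sub>U - \<sigma>\<close> the graph condition
  gives \<open>W u \<le> 0\<close>.\<close>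
lemma excitatory_rates_if_spec_rad_graph_code:
  assumes dale: "dale_matrix n W E I" and ga: "ground_assumption n W" and \<sigma>E: "\<sigma> \<subseteq> E"
    and sr: "spec_rad (principal_submatrix W (uninhibited W E I \<inter> \<sigma>)) < 1"
    and gc: "\<sigma> \<in> graph_code (exc_graph W E) E (uninhibited W E I)"
  shows "\<exists>u\<in>carrier_vec n. (\<forall>i<n. u $ i \<ge> 0) \<and> (\<forall>i\<in>I. u $ i = 0) \<and> exc_support E u = \<sigma> \<and>
           (\<forall>j\<in>uninhibited W E I. (W *\<^sub>v u) $ j \<le> u $ j)"
proof -
  note D = dale_matrixD[OF dale]
  define U where "U = uninhibited W E I"
  define \<tau> where "\<tau> = U \<inter> \<sigma>"
  have \<sigma>: "\<sigma> \<subseteq> {..<n}" using \<sigma>E D(2) by blast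
  then have \<tau>: "\<tau> \<subseteq> {..<n}" unfolding \<tau>_def by blast
  obtain r where r: "\<forall>j\<in>\<tau>. r j > 0 \<and> r j = 1 + (\<Sum>l\<in>\<sigma> - \<tau>. W $$ (j,l)) + (\<Sum>k\<in>\<tau>. W $$ (j,k) * r k)"
    using uninhibited_rates_if_spec_rad[OF dale ga \<sigma>E _ sr] unfolding \<tau>_def U_def by blast
  have r_pos: "r j > 0" if "j \<in> \<tau>" for j using r that by blast
  define u where "u = vec n (\<lambda>k. if k \<in> \<tau> then r k else if k \<in> \<sigma> then 1 else 0)"
  have u_index: "u $ k = (if k \<in> \<tau> then r k else if k \<in> \<sigma> then 1 else 0)" if "k < n" for k
    using that by (simp add: u_def)
  have u_pos: "u $ k > 0 \<longleftrightarrow> k \<in> \<sigma>" "u $ k \<ge> 0" if "k < n" for k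
    using u_index[OF that] r_pos unfolding \<tau>_def by (auto simp: less_imp_le)
  have Wu: "(W *\<^sub>v u) $ j = (\<Sum>k\<in>\<sigma>. W $$ (j,k) * u $ k)" if "j < n" for j
    by (rule mult_mat_vec_index_sum_support[OF D(1) _ that \<sigma>]) (auto simp: u_def \<tau>_def)
  have "(W *\<^sub>v u) $ j \<le> u $ j" if j: "j \<in> U" for j
  proof -
    have jn: "j < n" using j D(2) unfolding U_def uninhibited_def by blast
    show ?thesis
    proof (cases "j \<in> \<sigma>")
      case False
      then have "(\<Sum>k\<in>\<sigma>. W $$ (j,k) * u $ k) \<le> 0"
        using no_excitation_into_uninhibited_if_graph_code[OF gc] j u_pos \<sigma> unfolding U_def
        by (intro sum_nonpos mult_nonpos_nonneg) auto
      then show ?thesis using Wu[OF jn] u_pos(2)[OF jn] by linarith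
    next
      case True
      then have j\<tau>: "j \<in> \<tau>" using j unfolding \<tau>_def by blast
      have "(\<Sum>k\<in>\<sigma>. W $$ (j,k) * u $ k) = (\<Sum>k\<in>\<sigma> - \<tau>. W $$ (j,k) * u $ k) + (\<Sum>k\<in>\<tau>. W $$ (j,k) * u $ k)"
        by (rule sum.subset_diff) (use \<sigma> in \<open>auto simp: \<tau>_def intro: finite_subset\<close>)
      also have "(\<Sum>k\<in>\<sigma> - \<tau>. W $$ (j,k) * u $ k) = (\<Sum>l\<in>\<sigma> - \<tau>. W $$ (j,l))"
        using \<sigma> by (auto simp: u_index intro!: sum.cong)
      also have "(\<Sum>k\<in>\<tau>. W $$ (j,k) * u $ k) = (\<Sum>k\<in>\<tau>. W $$ (j,k) * r k)"
        using \<tau> by (auto simp: u_index intro!: sum.cong)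
      also have "(\<Sum>l\<in>\<sigma> - \<tau>. W $$ (j,l)) + \<dots> = u $ j - 1"
      proof -
        have "r j = 1 + (\<Sum>l\<in>\<sigma> - \<tau>. W $$ (j,l)) + (\<Sum>k\<in>\<tau>. W $$ (j,k) * r k)" using r j\<tau> by blast
        moreover have "u $ j = r j" using u_index[OF jn] j\<tau> by simp
        ultimately show ?thesis by linarith
      qed
      finally show ?thesis using Wu[OF jn] by simp
    qed
  qed
  moreover have "u $ i = 0" if "i \<in> I" for i
  proof -
    have "i < n" "i \<notin> \<sigma>" using that \<sigma>E D(2,3) by auto
    then show ?thesis using u_pos by force
  qed
  moreover have "exc_support E u = \<sigma>" using u_pos \<sigma>E D(2) unfolding exc_support_def by auto
  moreover have "u \<in> carrier_vec n" by (simp add: u_def)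
  ultimately show ?thesis using u_pos(2) unfolding U_def by blast
qed

theorem mainTheorem4:
  fixes n :: nat and W :: "real mat" and E I \<sigma> :: "nat set"
  assumes "dale_matrix n W E I"
    and "ground_assumption n W"
    and "\<sigma> \<noteq> {}" and "\<sigma> \<subseteq> E"
  shows "\<sigma> \<in> comb_code n W E \<longleftrightarrow>
           spec_rad (principal_submatrix W (uninhibited W E I \<inter> \<sigma>)) < 1 \<and>
           \<sigma> \<in> graph_code (exc_graph W E) E (uninhibited W E I)"
proof
  assume "\<sigma> \<in> comb_code n W E"
  then obtain x where x: "x \<in> carrier_vec n" "\<forall>i<n. x $ i \<ge> 0" "\<forall>i<n. (W *\<^sub>v x) $ i \<le> x $ i"
    and \<sigma>: "exc_support E x = \<sigma>"
    unfolding mem_comb_code_iff by blast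
  show "spec_rad (principal_submatrix W (uninhibited W E I \<inter> \<sigma>)) < 1 \<and>
      \<sigma> \<in> graph_code (exc_graph W E) E (uninhibited W E I)"
    using spec_rad_uninhibited_less_1_if_dominated[OF assms(1,2) x]
      graph_code_if_dominated[OF assms(1) x] unfolding \<sigma> by blast
next
  assume "spec_rad (principal_submatrix W (uninhibited W E I \<inter> \<sigma>)) < 1 \<and>
      \<sigma> \<in> graph_code (exc_graph W E) E (uninhibited W E I)"
  then obtain u where "u \<in> carrier_vec n" "\<forall>i<n. u $ i \<ge> 0" "\<forall>i\<in>I. u $ i = 0"
    "exc_support E u = \<sigma>" "\<forall>j\<in>uninhibited W E I. (W *\<^sub>v u) $ j \<le> u $ j"
    using excitatory_rates_if_spec_rad_graph_code[OF assms(1,2,4)] by blast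
  then show "\<sigma> \<in> comb_code n W E"
    using dominated_extension_by_inhibition[OF assms(1)] unfolding mem_comb_code_iff by metis
qed

end
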